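(* Let $m\ge3$ be odd and $n\ge2$. The $m$th order $n$-dimensional Hilbert tensor $\mathcal{A}=(a_{i_1\dots i_m})$, $a_{i_1\dots i_m}=\frac{1}{i_1+\cdots+i_m+1}$ for $i_1,\dots,i_m\in\{0,\dots,n-1\}$, is a strict Hankel tensor, and hence a strongly SOS tensor.
   Context: Index tensors by $\{0,\dots,n-1\}$. A Hankel tensor of order $k$ and dimension $n$ is a tensor with $a_{i_1\dots i_k}=h_{i_1+\cdots+i_k}$ for a generating vector $\mathbf{h}=(h_0,\dots,h_{(n-1)k})$. When $k$ is even, its associated Hankel matrix is the $((n-1)k/2+1)\times((n-1)k/2+1)$ matrix $(h_{p+q})_{p,q=0}^{(n-1)k/2}$, and the even order Hankel tensor is a strong Hankel tensor if this matrix is positive semi-definite. For an odd order $m$ symmetric Hankel tensor $\mathcal{A}$ and $i\in\{0,\dots,n-1\}$, let $\mathcal{A}_i=(a_{ii_2\dots i_m})$ be the $(m-1)$th order Hankel tensor obtained by fixing the first index at $i$ (generating vector $(h_{i+k})_{k=0}^{(n-1)(m-1)}$). $\mathcal{A}$ is a strict Hankel tensor if $\mathcal{A}_i$ is a strong Hankel tensor for every $i=0,\dots,n-1$. For odd $m$ and symmetric $\mathcal{A}$, with $F_i(\mathbf{x})=\sum_{i_2,\dots,i_m}a_{ii_2\dots i_m}x_{i_2}\cdots x_{i_m}$, $\mathcal{A}$ is a strongly SOS tensor if each $F_i$ is a sum of squares of real polynomials. *)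

theory Defs
  imports Complex_Main "HOL-Library.Multiset"
begin

text \<open>Tensors of order m and dimension n are functions on index lists of length m
  with entries in {0,...,n-1}; entries outside are irrelevant.\<close>

definition tensor_indices :: "nat \<Rightarrow> nat \<Rightarrow> nat list set" where
  "tensor_indices k n = {is. length is = k \<and> set is \<subseteq> {..<n}}"

definition symmetric_tensor :: "nat \<Rightarrow> nat \<Rightarrow> (nat list \<Rightarrow> real) \<Rightarrow> bool" where
  "symmetric_tensor k n A \<longleftrightarrow>
     (\<forall>is\<in>tensor_indices k n. \<forall>js\<in>tensor_indices k n. mset is = mset js \<longrightarrow> A is = A js)"

definition hankel_tensor_gen :: "nat \<Rightarrow> nat \<Rightarrow> (nat list \<Rightarrow> real) \<Rightarrow> (nat \<Rightarrow> real) \<Rightarrow> bool" where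
  "hankel_tensor_gen k n A h \<longleftrightarrow> (\<forall>is\<in>tensor_indices k n. A is = h (sum_list is))"

definition strong_hankel_gen :: "nat \<Rightarrow> nat \<Rightarrow> (nat \<Rightarrow> real) \<Rightarrow> bool" where
  "strong_hankel_gen k n h \<longleftrightarrow>
     (\<forall>y :: nat \<Rightarrow> real.
        (\<Sum>p\<le>(n - 1) * k div 2. \<Sum>q\<le>(n - 1) * k div 2. y p * h (p + q) * y q) \<ge> 0)"

text \<open>Strict Hankel tensor (odd order m, symmetric Hankel tensor): every slice
  A_i, with generating vector (h(i+k))_k, is a strong Hankel tensor.\<close>
definition strict_hankel_tensor :: "nat \<Rightarrow> nat \<Rightarrow> (nat list \<Rightarrow> real) \<Rightarrow> bool" where
  "strict_hankel_tensor m n A \<longleftrightarrow> odd m \<and> symmetric_tensor m n A \<and>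
     (\<exists>h. hankel_tensor_gen m n A h \<and>
          (\<forall>i<n. strong_hankel_gen (m - 1) n (\<lambda>k. h (i + k))))"

definition real_poly_fun :: "nat \<Rightarrow> ((nat \<Rightarrow> real) \<Rightarrow> real) \<Rightarrow> bool" where
  "real_poly_fun n f \<longleftrightarrow>
     (\<exists>(C :: (nat \<Rightarrow> nat) set) (c :: (nat \<Rightarrow> nat) \<Rightarrow> real). finite C \<and>
        (\<forall>x. f x = (\<Sum>\<alpha>\<in>C. c \<alpha> * (\<Prod>j<n. x j ^ \<alpha> j))))"

definition is_sos :: "nat \<Rightarrow> ((nat \<Rightarrow> real) \<Rightarrow> real) \<Rightarrow> bool" where
  "is_sos n F \<longleftrightarrow> (\<exists>qs. (\<forall>q\<in>set qs. real_poly_fun n q) \<and>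
                        (\<forall>x. F x = (\<Sum>q\<leftarrow>qs. (q x)\<^sup>2)))"

definition tensor_F :: "nat \<Rightarrow> nat \<Rightarrow> (nat list \<Rightarrow> real) \<Rightarrow> nat \<Rightarrow> (nat \<Rightarrow> real) \<Rightarrow> real" where
  "tensor_F m n A i x = (\<Sum>is\<in>tensor_indices (m - 1) n. A (i # is) * prod_list (map x is))"

definition strongly_sos_tensor :: "nat \<Rightarrow> nat \<Rightarrow> (nat list \<Rightarrow> real) \<Rightarrow> bool" where
  "strongly_sos_tensor m n A \<longleftrightarrow> odd m \<and> symmetric_tensor m n A \<and>
     (\<forall>i<n. is_sos n (tensor_F m n A i))"

definition hilbert_tensor :: "nat list \<Rightarrow> real" where
  "hilbert_tensor is = 1 / (real (sum_list is) + 1)"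

end

theory Submission
  imports Defs "HOL-Analysis.Analysis"
begin

text \<open>The generating vector 1/(k+1) is the moment sequence of Lebesgue measure on [0,1], so every
  Hankel form of the Hilbert tensor is an integral of t^i (\<Sum>p. y p t^p)^2 and hence nonnegative.
  For odd m = 2r+1, splitting the index list of F_i into two halves of length r writes F_i as such a
  positive semidefinite form applied to the polynomials Q_p(x), the sums of all monomials
  x_a1 ... x_ar with a1 + ... + ar = p. Completing squares (the Schur complement step) writes a
  positive semidefinite form as a sum of squares of linear forms, so F_i is a sum of squares.\<close>

lemma real_poly_fun_prod_list:
  assumes "set js \<subseteq> {..<n}"
  shows "real_poly_fun n (\<lambda>x. prod_list (map x js))"
proof -
  have "prod_list (map x js) = (\<Prod>j<n. x j ^ count (mset js) j)" for x :: "nat \<Rightarrow> real"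
  proof -
    have "prod_list (map x js) = prod_mset (image_mset x (mset js))"
      by (simp add: prod_mset_prod_list flip: mset_map)
    also have "\<dots> = (\<Prod>j\<in>set js. x j ^ count (mset js) j)"
      by (simp add: image_prod_mset_multiplicity)
    also have "\<dots> = (\<Prod>j<n. x j ^ count (mset js) j)"
      using assms by (intro prod.mono_neutral_left) (auto simp: count_mset count_list_0_iff)
    finally show ?thesis .
  qed
  then show ?thesis
    unfolding real_poly_fun_def by (intro exI[of _ "{count (mset js)}"] exI[of _ "\<lambda>_. 1"]) auto
qed

lemma real_poly_fun_cmult:
  assumes "real_poly_fun n f"
  shows "real_poly_fun n (\<lambda>x. c * f x)"
proof -
  obtain C d where "finite C" "\<And>x. f x = (\<Sum>\<alpha>\<in>C. d \<alpha> * (\<Prod>j<n. x j ^ \<alpha> j))"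
    using assms unfolding real_poly_fun_def by blast
  then show ?thesis
    unfolding real_poly_fun_def
    by (intro exI[of _ C] exI[of _ "\<lambda>\<alpha>. c * d \<alpha>"]) (simp add: sum_distrib_left mult.assoc)
qed

lemma real_poly_fun_add:
  assumes "real_poly_fun n f" "real_poly_fun n g"
  shows "real_poly_fun n (\<lambda>x. f x + g x)"
proof -
  obtain C c where C: "finite C" "\<And>x. f x = (\<Sum>\<alpha>\<in>C. c \<alpha> * (\<Prod>j<n. x j ^ \<alpha> j))"
    using assms(1) unfolding real_poly_fun_def by blast
  obtain D d where D: "finite D" "\<And>x. g x = (\<Sum>\<alpha>\<in>D. d \<alpha> * (\<Prod>j<n. x j ^ \<alpha> j))"
    using assms(2) unfolding real_poly_fun_def by blast
  define e where "e \<alpha> = (if \<alpha> \<in> C then c \<alpha> else 0) + (if \<alpha> \<in> D then d \<alpha> else 0)" for \<alpha>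
  have extend: "(\<Sum>\<alpha>\<in>A. a \<alpha> * (\<Prod>j<n. x j ^ \<alpha> j)) =
      (\<Sum>\<alpha>\<in>C \<union> D. (if \<alpha> \<in> A then a \<alpha> else 0) * (\<Prod>j<n. x j ^ \<alpha> j))"
    if "A \<subseteq> C \<union> D" for A a and x :: "nat \<Rightarrow> real"
    using that C(1) D(1) by (intro sum.mono_neutral_cong_left) auto
  have "f x + g x = (\<Sum>\<alpha>\<in>C \<union> D. e \<alpha> * (\<Prod>j<n. x j ^ \<alpha> j))" for x
    unfolding C(2) D(2) extend[of C c x, OF Un_upper1] extend[of D d x, OF Un_upper2] e_def
    by (simp only: distrib_right sum.distrib)
  then show ?thesis
    unfolding real_poly_fun_def using C(1) D(1) by (intro exI[of _ "C \<union> D"] exI[of _ e]) auto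
qed

lemma real_poly_fun_sum:
  assumes "finite I" "\<And>i. i \<in> I \<Longrightarrow> real_poly_fun n (f i)"
  shows "real_poly_fun n (\<lambda>x. \<Sum>i\<in>I. f i x)"
  using assms
proof (induction I rule: finite_induct)
  case empty
  then show ?case unfolding real_poly_fun_def by (intro exI[of _ "{}"]) auto
next
  case (insert i I)
  then show ?case by (simp add: real_poly_fun_add)
qed

definition quad_form :: "'a set \<Rightarrow> ('a \<Rightarrow> 'a \<Rightarrow> real) \<Rightarrow> ('a \<Rightarrow> real) \<Rightarrow> real" where
  "quad_form S H y = (\<Sum>p\<in>S. \<Sum>q\<in>S. y p * H p q * y q)"

lemma quad_form_fun_upd_notin:
  "a \<notin> S \<Longrightarrow> quad_form S H (y(a := t)) = quad_form S H y"
  unfolding quad_form_def by (intro sum.cong) auto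

lemma quad_form_insert:
  assumes "finite S" "a \<notin> S" "\<forall>q\<in>S. H q a = H a q"
  shows "quad_form (insert a S) H y =
    H a a * (y a)\<^sup>2 + 2 * y a * (\<Sum>q\<in>S. H a q * y q) + quad_form S H y"
proof -
  have "(\<Sum>p\<in>S. y p * H p a * y a) = y a * (\<Sum>q\<in>S. H a q * y q)"
    using assms(3) by (simp add: sum_distrib_left mult_ac)
  then show ?thesis
    using assms(1,2)
    by (simp add: quad_form_def sum.distrib sum_distrib_left power2_eq_square algebra_simps)
qed

definition schur_complement :: "'a \<Rightarrow> ('a \<Rightarrow> 'a \<Rightarrow> real) \<Rightarrow> 'a \<Rightarrow> 'a \<Rightarrow> real" where
  "schur_complement a H p q = H p q - H a p * H a q / H a a"

lemma quad_form_schur_complement: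
  "quad_form S (schur_complement a H) y = quad_form S H y - (\<Sum>q\<in>S. H a q * y q)\<^sup>2 / H a a"
proof -
  have "(\<Sum>q\<in>S. H a q * y q)\<^sup>2 = (\<Sum>p\<in>S. \<Sum>q\<in>S. (H a p * y p) * (H a q * y q))"
    by (simp add: power2_eq_square sum_product)
  then show ?thesis
    unfolding quad_form_def schur_complement_def
    by (simp add: sum_subtractf sum_divide_distrib right_diff_distrib left_diff_distrib mult_ac)
qed

definition pivot_row :: "'a \<Rightarrow> ('a \<Rightarrow> 'a \<Rightarrow> real) \<Rightarrow> 'a \<Rightarrow> real" where
  "pivot_row a H p = (if p = a then sqrt (H a a) else H a p / sqrt (H a a))"

context
  fixes S :: "'a set" and a :: 'a and H :: "'a \<Rightarrow> 'a \<Rightarrow> real"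
  assumes S_finite: "finite S" and a_notin: "a \<notin> S" and row_sym: "\<forall>q\<in>S. H q a = H a q"
    and psd_insert: "\<forall>y. 0 \<le> quad_form (insert a S) H y"
begin

lemma psd_diagonal_nonneg: "0 \<le> H a a"
proof -
  have "quad_form S H (\<lambda>_. 0) = 0"
    by (simp add: quad_form_def)
  then have "quad_form (insert a S) H ((\<lambda>_. 0)(a := 1)) = H a a"
    using a_notin
    by (simp add: quad_form_insert[OF S_finite a_notin row_sym] quad_form_fun_upd_notin)
      (auto intro!: sum.neutral)
  then show ?thesis using psd_insert by metis
qed

lemma psd_zero_diagonal_row:
  assumes "H a a = 0"
  shows "\<forall>q\<in>S. H a q = 0"
proof -
  define c where "c = (\<Sum>q\<in>S. (H a q)\<^sup>2)"
  have at_t: "quad_form (insert a S) H ((H a)(a := t)) = 2 * t * c + quad_form S H (H a)" for t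
  proof -
    have "(\<Sum>q\<in>S. H a q * ((H a)(a := t)) q) = c"
      using a_notin unfolding c_def by (intro sum.cong) (auto simp: power2_eq_square)
    then show ?thesis
      using a_notin assms
      by (simp add: quad_form_insert[OF S_finite a_notin row_sym] quad_form_fun_upd_notin)
  qed
  have "c = 0"
  proof (rule ccontr)
    assume "c \<noteq> 0"
    then have "c > 0" unfolding c_def by (simp add: order_less_le sum_nonneg)
    define t where "t = - (\<bar>quad_form S H (H a)\<bar> + 1) / (2 * c)"
    have "2 * t * c = - (\<bar>quad_form S H (H a)\<bar> + 1)"
      using \<open>c > 0\<close> unfolding t_def by simp
    then have "2 * t * c + quad_form S H (H a) < 0"
      by linarith
    then show False using psd_insert at_t by (metis not_le)
  qed
  then show ?thesis
    using sum_nonneg_eq_0_iff[OF S_finite, of "\<lambda>q. (H a q)\<^sup>2"] unfolding c_def by simp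
qed

lemma psd_schur_complement: "0 \<le> quad_form S (schur_complement a H) y"
proof -
  define s where "s = (\<Sum>q\<in>S. H a q * y q)"
  have "(\<Sum>q\<in>S. H a q * (y(a := - s / H a a)) q) = s"
    using a_notin unfolding s_def by (intro sum.cong) auto
  \<comment> \<open>If H a a = 0, division by zero yields 0: the test vector is y(a := 0) and the
    Schur complement is H itself.\<close>
  then have "quad_form (insert a S) H (y(a := - s / H a a)) = quad_form S H y - s\<^sup>2 / H a a"
    using a_notin
    by (simp add: quad_form_insert[OF S_finite a_notin row_sym] quad_form_fun_upd_notin
        power2_eq_square field_simps)
  then show ?thesis
    using psd_insert by (metis quad_form_schur_complement s_def)
qed

lemma quad_form_insert_eq_pivot_square_plus_schur_complement:
  "quad_form (insert a S) H y =
    (\<Sum>p\<in>insert a S. pivot_row a H p * y p)\<^sup>2 + quad_form S (schur_complement a H) y"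
proof -
  define s where "s = (\<Sum>q\<in>S. H a q * y q)"
  have "(\<Sum>p\<in>insert a S. pivot_row a H p * y p) = sqrt (H a a) * y a + s / sqrt (H a a)"
    using S_finite a_notin unfolding s_def pivot_row_def
    by (auto simp: sum_divide_distrib intro!: sum.cong)
  moreover have "H a a * (y a)\<^sup>2 + 2 * y a * s =
      (sqrt (H a a) * y a + s / sqrt (H a a))\<^sup>2 - s\<^sup>2 / H a a"
  proof (cases "H a a = 0")
    case True
    then have "s = 0" using psd_zero_diagonal_row unfolding s_def by simp
    with True show ?thesis by simp
  next
    case False
    then have "H a a > 0" using psd_diagonal_nonneg by simp
    then show ?thesis by (simp add: power2_eq_square field_simps)
  qed
  ultimately show ?thesis
    by (simp add: quad_form_insert[OF S_finite a_notin row_sym] quad_form_schur_complement s_def)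
qed

end

lemma sum_insert_fun_upd_zero:
  fixes l y :: "'a \<Rightarrow> real"
  assumes "finite S" "a \<notin> S"
  shows "(\<Sum>p\<in>insert a S. (l(a := 0)) p * y p) = (\<Sum>p\<in>S. l p * y p)"
  using assms by (simp, intro sum.cong) auto

lemma psd_quad_form_sum_squares:
  assumes "finite S" "\<forall>p\<in>S. \<forall>q\<in>S. H p q = H q p" "\<forall>y. 0 \<le> quad_form S H y"
  shows "\<exists>ls. \<forall>y. quad_form S H y = (\<Sum>l\<leftarrow>ls. (\<Sum>p\<in>S. l p * y p)\<^sup>2)"
  using assms
proof (induction S arbitrary: H rule: finite_induct)
  case empty
  show ?case by (intro exI[of _ "[]"]) (simp add: quad_form_def)
next
  case (insert a S)
  have row: "\<forall>q\<in>S. H q a = H a q"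
    using insert.prems(1) by blast
  have "\<forall>p\<in>S. \<forall>q\<in>S. schur_complement a H p q = schur_complement a H q p"
    using insert.prems(1) unfolding schur_complement_def by (metis insertCI mult.commute)
  moreover have "\<forall>y. 0 \<le> quad_form S (schur_complement a H) y"
    using psd_schur_complement[OF insert.hyps row insert.prems(2)] by blast
  ultimately obtain ls
    where ls: "\<forall>y. quad_form S (schur_complement a H) y = (\<Sum>l\<leftarrow>ls. (\<Sum>p\<in>S. l p * y p)\<^sup>2)"
    using insert.IH by blast
  have "quad_form (insert a S) H y =
      (\<Sum>l\<leftarrow>pivot_row a H # map (\<lambda>l. l(a := 0)) ls. (\<Sum>p\<in>insert a S. l p * y p)\<^sup>2)" for y
    using quad_form_insert_eq_pivot_square_plus_schur_complement[OF insert.hyps row insert.prems(2)]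
      ls
    by (simp add: o_def sum_insert_fun_upd_zero[OF insert.hyps] del: fun_upd_apply sum.insert)
  then show ?case by blast
qed

lemma is_sos_psd_quad_form_comp:
  assumes "finite S" "\<forall>p\<in>S. \<forall>q\<in>S. H p q = H q p" "\<forall>y. 0 \<le> quad_form S H y"
    and "\<And>p. p \<in> S \<Longrightarrow> real_poly_fun n (\<lambda>x. Q x p)"
  shows "is_sos n (\<lambda>x. quad_form S H (Q x))"
proof -
  obtain ls where ls: "\<forall>y. quad_form S H y = (\<Sum>l\<leftarrow>ls. (\<Sum>p\<in>S. l p * y p)\<^sup>2)"
    using psd_quad_form_sum_squares[OF assms(1-3)] by blast
  have "real_poly_fun n (\<lambda>x. \<Sum>p\<in>S. l p * Q x p)" for l
    using assms(1,4) by (intro real_poly_fun_sum real_poly_fun_cmult)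
  then show ?thesis
    unfolding is_sos_def using ls
    by (intro exI[of _ "map (\<lambda>l x. \<Sum>p\<in>S. l p * Q x p) ls"]) (auto simp: o_def)
qed

lemma finite_tensor_indices: "finite (tensor_indices k n)"
proof -
  have "tensor_indices k n = {xs. set xs \<subseteq> {..<n} \<and> length xs = k}"
    by (auto simp: tensor_indices_def)
  then show ?thesis using finite_lists_length_eq[of "{..<n}" k] by simp
qed

lemma sum_list_le_length_mult: "set xs \<subseteq> {..<n} \<Longrightarrow> sum_list xs \<le> length xs * (n - 1)"
  by (induction xs) auto

lemma tensor_indices_add:
  "tensor_indices (r + s) n = (\<lambda>(a, b). a @ b) ` (tensor_indices r n \<times> tensor_indices s n)"
proof
  show "tensor_indices (r + s) n \<subseteq> (\<lambda>(a, b). a @ b) ` (tensor_indices r n \<times> tensor_indices s n)"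
  proof
    fix xs assume xs: "xs \<in> tensor_indices (r + s) n"
    then have "(take r xs, drop r xs) \<in> tensor_indices r n \<times> tensor_indices s n"
      by (auto simp: tensor_indices_def dest: in_set_takeD in_set_dropD)
    then show "xs \<in> (\<lambda>(a, b). a @ b) ` (tensor_indices r n \<times> tensor_indices s n)"
      by (metis (no_types, lifting) append_take_drop_id case_prod_conv image_eqI)
  qed
qed (auto simp: tensor_indices_def)

lemma inj_on_append_tensor_indices:
  "inj_on (\<lambda>(a, b). a @ b) (tensor_indices r n \<times> tensor_indices s n)"
  by (auto simp: inj_on_def tensor_indices_def)

lemma quad_form_fibre_sums:
  assumes "finite T" "finite S" "g ` T \<subseteq> S"
  shows "quad_form S H (\<lambda>p. \<Sum>a | a \<in> T \<and> g a = p. w a) =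
    (\<Sum>a\<in>T. \<Sum>b\<in>T. w a * H (g a) (g b) * w b)"
proof -
  have group: "(\<Sum>p\<in>S. \<Sum>a | a \<in> T \<and> g a = p. f a) = (\<Sum>a\<in>T. f a)" for f :: "_ \<Rightarrow> real"
    using assms by (rule sum.group)
  have "quad_form S H (\<lambda>p. \<Sum>a | a \<in> T \<and> g a = p. w a) =
      (\<Sum>p\<in>S. \<Sum>a | a \<in> T \<and> g a = p. \<Sum>q\<in>S. \<Sum>b | b \<in> T \<and> g b = q. w a * H (g a) (g b) * w b)"
    unfolding quad_form_def
  proof (intro sum.cong refl)
    fix p
    have "(\<Sum>a | a \<in> T \<and> g a = p. w a) * H p q * (\<Sum>b | b \<in> T \<and> g b = q. w b) =
        (\<Sum>a | a \<in> T \<and> g a = p. \<Sum>b | b \<in> T \<and> g b = q. w a * H (g a) (g b) * w b)" for q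
      by (simp add: sum_distrib_left sum_distrib_right mult_ac)
    then show "(\<Sum>q\<in>S. (\<Sum>a | a \<in> T \<and> g a = p. w a) * H p q * (\<Sum>b | b \<in> T \<and> g b = q. w b)) =
        (\<Sum>a | a \<in> T \<and> g a = p. \<Sum>q\<in>S. \<Sum>b | b \<in> T \<and> g b = q. w a * H (g a) (g b) * w b)"
      by (simp only: sum.swap[of _ S])
  qed
  also have "\<dots> = (\<Sum>a\<in>T. \<Sum>b\<in>T. w a * H (g a) (g b) * w b)"
    unfolding group ..
  finally show ?thesis .
qed

definition monomials_of_weight :: "nat \<Rightarrow> nat \<Rightarrow> nat \<Rightarrow> (nat \<Rightarrow> real) \<Rightarrow> real" where
  "monomials_of_weight r n p x =
    (\<Sum>a | a \<in> tensor_indices r n \<and> sum_list a = p. prod_list (map x a))"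

lemma real_poly_fun_monomials_of_weight: "real_poly_fun n (monomials_of_weight r n p)"
proof -
  have "real_poly_fun n (\<lambda>x. \<Sum>a | a \<in> tensor_indices r n \<and> sum_list a = p. prod_list (map x a))"
    using finite_tensor_indices[of r n]
    by (intro real_poly_fun_sum real_poly_fun_prod_list)
      (auto simp: tensor_indices_def elim: rev_finite_subset)
  then show ?thesis
    by (simp add: monomials_of_weight_def[abs_def])
qed

lemma tensor_F_hankel_eq_quad_form:
  assumes "hankel_tensor_gen (Suc (r + r)) n A h" "i < n"
  shows "tensor_F (Suc (r + r)) n A i x =
    quad_form {..r * (n - 1)} (\<lambda>p q. h (i + (p + q))) (\<lambda>p. monomials_of_weight r n p x)"
proof -
  let ?T = "tensor_indices r n"
  have "tensor_F (Suc (r + r)) n A i x =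
      (\<Sum>xs\<in>tensor_indices (r + r) n. h (i + sum_list xs) * prod_list (map x xs))"
    using assms unfolding tensor_F_def hankel_tensor_gen_def
    by (intro sum.cong refl) (auto simp: tensor_indices_def)
  also have "\<dots> = (\<Sum>(a, b)\<in>?T \<times> ?T. h (i + sum_list (a @ b)) * prod_list (map x (a @ b)))"
    unfolding tensor_indices_add
    by (subst sum.reindex[OF inj_on_append_tensor_indices]) (simp add: case_prod_unfold)
  also have "\<dots> = (\<Sum>a\<in>?T. \<Sum>b\<in>?T.
      prod_list (map x a) * h (i + (sum_list a + sum_list b)) * prod_list (map x b))"
    unfolding sum.cartesian_product[symmetric] by (simp add: mult_ac)
  also have "\<dots> =
      quad_form {..r * (n - 1)} (\<lambda>p q. h (i + (p + q))) (\<lambda>p. monomials_of_weight r n p x)"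
    unfolding monomials_of_weight_def
    by (rule quad_form_fibre_sums[symmetric])
      (use finite_tensor_indices sum_list_le_length_mult in \<open>auto simp: tensor_indices_def\<close>)
  finally show ?thesis .
qed

lemma hankel_tensor_symmetric:
  assumes "hankel_tensor_gen k n A h"
  shows "symmetric_tensor k n A"
  unfolding symmetric_tensor_def
proof (intro ballI impI)
  fix xs ys assume "xs \<in> tensor_indices k n" "ys \<in> tensor_indices k n" "mset xs = mset ys"
  moreover from \<open>mset xs = mset ys\<close> have "sum_list xs = sum_list ys"
    by (metis sum_mset_sum_list)
  ultimately show "A xs = A ys"
    using assms unfolding hankel_tensor_gen_def by simp
qed

lemma strong_hankel_gen_iff_psd:
  "strong_hankel_gen k n h \<longleftrightarrow> (\<forall>y. 0 \<le> quad_form {..(n - 1) * k div 2} (\<lambda>p q. h (p + q)) y)"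
  by (simp add: strong_hankel_gen_def quad_form_def)

lemma strict_hankel_tensor_imp_strongly_sos:
  assumes "strict_hankel_tensor m n A"
  shows "strongly_sos_tensor m n A"
proof -
  obtain h where "odd m" "symmetric_tensor m n A" and hankel: "hankel_tensor_gen m n A h"
    and strong: "\<forall>i<n. strong_hankel_gen (m - 1) n (\<lambda>k. h (i + k))"
    using assms unfolding strict_hankel_tensor_def by blast
  then obtain r where m: "m = Suc (r + r)"
    by (metis oddE mult_2 Suc_eq_plus1)
  have "is_sos n (tensor_F m n A i)" if "i < n" for i
  proof -
    have "\<forall>y. 0 \<le> quad_form {..r * (n - 1)} (\<lambda>p q. h (i + (p + q))) y"
      using strong that unfolding strong_hankel_gen_iff_psd m
      by (simp add: mult.commute flip: mult_2)
    then have "is_sos n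
        (\<lambda>x. quad_form {..r * (n - 1)} (\<lambda>p q. h (i + (p + q))) (\<lambda>p. monomials_of_weight r n p x))"
      by (intro is_sos_psd_quad_form_comp real_poly_fun_monomials_of_weight)
        (auto simp: add.commute)
    moreover have "tensor_F m n A i =
        (\<lambda>x. quad_form {..r * (n - 1)} (\<lambda>p q. h (i + (p + q))) (\<lambda>p. monomials_of_weight r n p x))"
      using tensor_F_hankel_eq_quad_form[OF hankel[unfolded m] that] unfolding m by (intro ext)
    ultimately show ?thesis
      by simp
  qed
  then show ?thesis
    using \<open>odd m\<close> \<open>symmetric_tensor m n A\<close> unfolding strongly_sos_tensor_def by blast
qed

lemma has_integral_power_unit_interval:
  "((\<lambda>t::real. t ^ k) has_integral 1 / (real k + 1)) {0..1}"
proof -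
  have "((\<lambda>t::real. t ^ k) has_integral 1 ^ Suc k / real (Suc k) - 0 ^ Suc k / real (Suc k)) {0..1}"
  proof (rule fundamental_theorem_of_calculus)
    fix t :: real
    have "((\<lambda>t. t ^ Suc k / real (Suc k)) has_real_derivative t ^ k) (at t)"
      by (intro derivative_eq_intros) auto
    then show "((\<lambda>t. t ^ Suc k / real (Suc k)) has_vector_derivative t ^ k) (at t within {0..1})"
      by (simp add: has_real_derivative_iff_has_vector_derivative[symmetric]
          has_field_derivative_at_within)
  qed simp
  then show ?thesis by (simp add: add.commute)
qed

lemma hilbert_hankel_form_nonneg:
  "0 \<le> quad_form {..N} (\<lambda>p q. 1 / (real (i + (p + q)) + 1)) y"
proof (rule has_integral_nonneg)
  show "((\<lambda>t. quad_form {..N} (\<lambda>p q. t ^ (i + (p + q))) y) has_integral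
      quad_form {..N} (\<lambda>p q. 1 / (real (i + (p + q)) + 1)) y) {0..1}"
    unfolding quad_form_def
    by (intro has_integral_sum has_integral_mult_left has_integral_mult_right
        has_integral_power_unit_interval) auto
  fix t :: real
  assume "t \<in> {0..1}"
  moreover have "quad_form {..N} (\<lambda>p q. t ^ (i + (p + q))) y = t ^ i * (\<Sum>p\<le>N. y p * t ^ p)\<^sup>2"
    by (simp add: quad_form_def power2_eq_square sum_distrib_left sum_distrib_right power_add
        mult_ac)
  ultimately show "0 \<le> quad_form {..N} (\<lambda>p q. t ^ (i + (p + q))) y"
    by simp
qed

lemma strict_hankel_tensor_hilbert:
  assumes "odd m"
  shows "strict_hankel_tensor m n hilbert_tensor"
proof -
  have hankel: "hankel_tensor_gen m n hilbert_tensor (\<lambda>k. 1 / (real k + 1))"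
    by (simp add: hankel_tensor_gen_def hilbert_tensor_def)
  moreover have "strong_hankel_gen (m - 1) n (\<lambda>k. 1 / (real (i + k) + 1))" for i
    unfolding strong_hankel_gen_iff_psd using hilbert_hankel_form_nonneg by blast
  ultimately show ?thesis
    unfolding strict_hankel_tensor_def using assms hankel_tensor_symmetric[OF hankel] by blast
qed

theorem theorem4p5:
  fixes m n :: nat
  assumes "m \<ge> 3" and "odd m" and "n \<ge> 2"
  shows "strict_hankel_tensor m n hilbert_tensor \<and> strongly_sos_tensor m n hilbert_tensor"
  using strict_hankel_tensor_hilbert[OF assms(2)] strict_hankel_tensor_imp_strongly_sos by blast

end
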